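(* Let $G=\mathrm{GL}_2(F)$, let $N$ be the subgroup of upper triangular unipotent matrices, $A$ the subgroup of diagonal matrices and $K_A=A\cap\mathrm{GL}_2(\mathcal{O})$ the group of diagonal matrices with unit entries. Consider the action of $A\times K_A$ on $N\backslash G$ given by $(a,k)\cdot Ng = Nagk^{-1}$. Then a set of representatives for the orbits of this action is given by the cosets of the matrices $$\begin{pmatrix}1&0\\ \varpi^{\gamma}&1\end{pmatrix},\ 0\le \gamma\le\infty,\qquad \begin{pmatrix}0&1\\ 1&\varpi^{\gamma}\end{pmatrix},\ 1\le\gamma\le\infty;$$ that is, every orbit contains exactly one of these cosets.
   Context: $F$ is a non-archimedean local field of characteristic $0$ with ring of integers $\mathcal{O}$, uniformiser $\varpi$ and valuation $v$ with $v(\varpi)=1$. By convention $\varpi^{\infty}=0$. $A$ normalises $N$, so left multiplication by $A$ and right multiplication by $K_A$ give a well-defined two-sided action on $N\backslash G$. *)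

theory Defs
  imports "HOL-Analysis.Analysis" "HOL-Library.Extended_Nat"
begin

text \<open>Discrete valuation on a field, given on nonzero elements by an integer-valued
  function v (with the convention v 0 = infinity, handled by explicit case distinctions).\<close>

definition val_ring :: "('a::field \<Rightarrow> int) \<Rightarrow> 'a set" where
  "val_ring v = {x. x = 0 \<or> v x \<ge> 0}"

definition is_unit_val :: "('a::field \<Rightarrow> int) \<Rightarrow> 'a \<Rightarrow> bool" where
  "is_unit_val v x \<longleftrightarrow> x \<noteq> 0 \<and> v x = 0"

text \<open>Non-archimedean local field (characteristic 0 is imposed through the type class
  field_char_0 in the statement): a field with a normalised discrete valuation v,
  uniformiser p (v p = 1), complete for the valuation, with finite residue field.\<close>

definition nonarch_local_field :: "('a::field \<Rightarrow> int) \<Rightarrow> 'a \<Rightarrow> bool" where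
  "nonarch_local_field v p \<longleftrightarrow>
     (\<forall>x y. x \<noteq> 0 \<longrightarrow> y \<noteq> 0 \<longrightarrow> v (x * y) = v x + v y) \<and>
     (\<forall>x y. x \<noteq> 0 \<longrightarrow> y \<noteq> 0 \<longrightarrow> x + y \<noteq> 0 \<longrightarrow> v (x + y) \<ge> min (v x) (v y)) \<and>
     p \<noteq> 0 \<and> v p = 1 \<and>
     (\<forall>s::nat \<Rightarrow> 'a.
        (\<forall>M::int. \<exists>K. \<forall>m\<ge>K. \<forall>n\<ge>K. s m = s n \<or> v (s m - s n) \<ge> M) \<longrightarrow>
        (\<exists>L. \<forall>M::int. \<exists>K. \<forall>n\<ge>K. s n = L \<or> v (s n - L) \<ge> M)) \<and>
     (\<exists>R. finite R \<and> R \<subseteq> val_ring v \<and>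
        (\<forall>x\<in>val_ring v. \<exists>r\<in>R. x = r \<or> v (x - r) \<ge> 1))"

definition upow :: "'a::field \<Rightarrow> enat \<Rightarrow> 'a" where
  "upow p g = (case g of enat n \<Rightarrow> p ^ n | \<infinity> \<Rightarrow> 0)"

definition mat2 :: "'a::zero \<Rightarrow> 'a \<Rightarrow> 'a \<Rightarrow> 'a \<Rightarrow> 'a^2^2" where
  "mat2 a b c d = (\<chi> i j. if i = 1 then (if j = 1 then a else b) else (if j = 1 then c else d))"

definition GL2 :: "('a::field^2^2) set" where
  "GL2 = {g. invertible g}"

definition Nsub :: "('a::field^2^2) set" where
  "Nsub = {mat2 1 x 0 1 | x. True}"

definition Asub :: "('a::field^2^2) set" where
  "Asub = {mat2 x 0 0 y | x y. x \<noteq> 0 \<and> y \<noteq> 0}"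

definition KAsub :: "('a::field \<Rightarrow> int) \<Rightarrow> ('a^2^2) set" where
  "KAsub v = {mat2 x 0 0 y | x y. is_unit_val v x \<and> is_unit_val v y}"

definition Ncoset :: "'a::field^2^2 \<Rightarrow> ('a^2^2) set" where
  "Ncoset g = (\<lambda>n. n ** g) ` Nsub"

text \<open>Action of (a,k) on a subset S of G: S \<mapsto> a S k^{-1}; on N g this is N a g k^{-1}.\<close>

definition act :: "'a::field^2^2 \<Rightarrow> 'a^2^2 \<Rightarrow> ('a^2^2) set \<Rightarrow> ('a^2^2) set" where
  "act a k S = (\<lambda>x. a ** x ** matrix_inv k) ` S"

definition orbit :: "('a::field \<Rightarrow> int) \<Rightarrow> ('a^2^2) set \<Rightarrow> ('a^2^2) set set" where
  "orbit v C = {act a k C | a k. a \<in> Asub \<and> k \<in> KAsub v}"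

definition rep_cosets :: "'a::field \<Rightarrow> ('a^2^2) set set" where
  "rep_cosets p =
     {Ncoset (mat2 1 0 (upow p g) 1) | g. True} \<union>
     {Ncoset (mat2 0 1 1 (upow p g)) | g. 1 \<le> g}"

end

theory Submission
  imports Defs
begin

text \<open>Left multiplication by N fixes both the bottom row (c, d) and the determinant of g, and an
  invertible matrix is determined up to N by these two data. The element diag(\<alpha>, \<beta>) of A scales
  the bottom row by \<beta> and the determinant by \<alpha>\<beta>, while diag(u, w) in K_A turns (c, d) into
  (c/u, d/w). So the orbits correspond to nonzero rows (c, d) up to a common nonzero factor and
  independent unit factors, and these classes are classified by the gap v(c) - v(d), taken in
  \<int> \<union> {\<plusminus>\<infinity>}. The representatives have bottom rows (\<pi>^\<gamma>, 1) and (1, \<pi>^\<gamma>), whose gaps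
  \<gamma> \<ge> 0 and -\<gamma> \<le> -1 exhaust \<int> \<union> {\<plusminus>\<infinity>} exactly once.\<close>

lemma mat2_nth [simp]:
  "mat2 a b c d $ 1 $ 1 = a" "mat2 a b c d $ 1 $ 2 = b"
  "mat2 a b c d $ 2 $ 1 = c" "mat2 a b c d $ 2 $ 2 = d"
  by (simp_all add: mat2_def)

lemma mat2_eta: "(M :: 'a::zero^2^2) = mat2 (M$1$1) (M$1$2) (M$2$1) (M$2$2)"
  unfolding vec_eq_iff forall_2 by simp

lemma mat2_mult:
  "mat2 a b c d ** mat2 a' b' c' d' =
     mat2 (a*a' + b*c') (a*b' + b*d') (c*a' + d*c') (c*b' + d*d' :: 'a::semiring_1)"
  unfolding vec_eq_iff forall_2 matrix_matrix_mult_def by (simp add: sum_2)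

lemma mat_1_eq_mat2: "(mat 1 :: 'a::{zero,one}^2^2) = mat2 1 0 0 1"
  unfolding vec_eq_iff forall_2 by (simp add: mat_def)

lemma det_mat2: "det (mat2 a b c d :: 'a::comm_ring_1^2^2) = a*d - b*c"
  by (simp add: det_2)

lemma diag_mult_mult_diag:
  "mat2 \<alpha> 0 0 \<beta> ** g ** mat2 u 0 0 w =
     mat2 (\<alpha> * g$1$1 * u) (\<alpha> * g$1$2 * w) (\<beta> * g$2$1 * u) (\<beta> * g$2$2 * (w :: 'a::semiring_1))"
  by (subst mat2_eta[of g]) (simp add: mat2_mult)

lemma matrix_inv_unique:
  fixes A B :: "'a::semiring_1^'n^'n"
  assumes "A ** B = mat 1" "B ** A = mat 1"
  shows "matrix_inv A = B"
proof -
  have "A ** matrix_inv A = mat 1 \<and> matrix_inv A ** A = mat 1"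
    unfolding matrix_inv_def using assms by (rule someI[of _ B, OF conjI])
  then have "matrix_inv A = matrix_inv A ** (A ** B)"
    using assms by simp
  also have "\<dots> = B"
    using \<open>A ** matrix_inv A = mat 1 \<and> _\<close> by (simp add: matrix_mul_assoc)
  finally show ?thesis .
qed

lemma matrix_inv_diag:
  fixes u w :: "'a::field"
  assumes "u \<noteq> 0" "w \<noteq> 0"
  shows "matrix_inv (mat2 u 0 0 w) = mat2 (1/u) 0 0 (1/w)"
  by (rule matrix_inv_unique) (simp_all add: mat2_mult mat_1_eq_mat2 assms)

lemma Ncoset_eq_range: "Ncoset g = range (\<lambda>x. mat2 1 x 0 1 ** g)"
  unfolding Ncoset_def Nsub_def by auto

lemma mem_Ncoset_self: "(g :: 'a::field^2^2) \<in> Ncoset g"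
  unfolding Ncoset_eq_range
  by (rule range_eqI[where x = 0]) (simp add: mat_1_eq_mat2[symmetric])

lemma unipotent_mult_row2: "(mat2 1 x 0 1 ** g) $ 2 = (g :: 'a::semiring_1^2^2) $ 2"
  by (simp add: matrix_matrix_mult_def sum_2 vec_eq_iff)

lemma mem_Ncoset_row2: "h \<in> Ncoset g \<Longrightarrow> h $ 2 = (g :: 'a::field^2^2) $ 2"
  unfolding Ncoset_eq_range using unipotent_mult_row2 by auto

lemma Ncoset_unipotent_mult: "Ncoset (mat2 1 x 0 1 ** g) = Ncoset (g :: 'a::field^2^2)"
proof -
  have "range (\<lambda>y. mat2 1 y 0 1 ** (mat2 1 x 0 1 ** g)) = (\<lambda>y. mat2 1 y 0 1 ** g) ` range ((+) x)"
    unfolding image_image by (simp add: matrix_mul_assoc mat2_mult)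
  also have "\<dots> = range (\<lambda>y. mat2 1 y 0 1 ** g)"
    by simp
  finally show ?thesis unfolding Ncoset_eq_range .
qed

lemma Ncoset_eqI:
  fixes g h :: "'a::field^2^2"
  assumes "det g \<noteq> 0" "h $ 2 = g $ 2" "det h = det g"
  shows "Ncoset h = Ncoset g"
proof -
  obtain a b c d a' b' where g: "g = mat2 a b c d" and h: "h = mat2 a' b' c d"
    using assms(2) mat2_eta[of g] mat2_eta[of h] by (metis vec_eq_iff)
  have det: "a*d - b*c \<noteq> 0" "a'*d - b'*c = a*d - b*c"
    using assms(1,3) by (simp_all add: g h det_mat2)
  \<comment> \<open>the upper right entry of h g^-1\<close>
  define x where "x = (a * b' - a' * b) / (a*d - b*c)"
  have "a + x * c = a'" "b + x * d = b'"
    using det unfolding x_def by (simp_all add: field_simps, algebra+)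
  then have "h = mat2 1 x 0 1 ** g"
    by (simp add: g h mat2_mult)
  then show ?thesis by (simp add: Ncoset_unipotent_mult)
qed

lemma act_Ncoset:
  assumes "a \<in> Asub"
  shows "act a k (Ncoset g) = Ncoset (a ** g ** matrix_inv k)"
proof -
  obtain \<alpha> \<beta> where a: "a = mat2 \<alpha> 0 0 \<beta>" "\<alpha> \<noteq> 0" "\<beta> \<noteq> 0"
    using assms unfolding Asub_def by auto
  have commute: "a ** mat2 1 x 0 1 = mat2 1 (\<alpha> * x / \<beta>) 0 1 ** a" for x
    using a by (simp add: mat2_mult)
  have "act a k (Ncoset g) = (\<lambda>y. mat2 1 y 0 1 ** (a ** g ** matrix_inv k)) ` range (\<lambda>x. \<alpha> * x / \<beta>)"
    unfolding act_def Ncoset_eq_range image_image by (simp add: matrix_mul_assoc commute)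
  also have "range (\<lambda>x. \<alpha> * x / \<beta>) = UNIV"
    using a by (intro surjI[where f = "\<lambda>y. \<beta> * y / \<alpha>"]) simp
  finally show ?thesis unfolding Ncoset_eq_range .
qed

lemma rep_coset_cases:
  assumes "C \<in> rep_cosets p"
  obtains \<gamma> where "C = Ncoset (mat2 1 0 (upow p \<gamma>) 1)"
    | \<gamma> where "C = Ncoset (mat2 0 1 1 (upow p \<gamma>))" "1 \<le> \<gamma>"
  using assms unfolding rep_cosets_def by blast

definition row_equiv :: "('a::field \<Rightarrow> int) \<Rightarrow> 'a \<Rightarrow> 'a \<Rightarrow> 'a \<Rightarrow> 'a \<Rightarrow> bool" where
  "row_equiv v c d c' d' \<longleftrightarrow>
     (\<exists>b u w. b \<noteq> 0 \<and> is_unit_val v u \<and> is_unit_val v w \<and> c' = b * c * u \<and> d' = b * d * w)"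

definition val_gap :: "('a::field \<Rightarrow> int) \<Rightarrow> 'a \<Rightarrow> 'a \<Rightarrow> ereal" where
  "val_gap v c d = (if c = 0 then \<infinity> else if d = 0 then -\<infinity> else ereal (of_int (v c - v d)))"

lemma row_equiv_swap: "row_equiv v c d c' d' \<Longrightarrow> row_equiv v d c d' c'"
  unfolding row_equiv_def by blast

locale normalised_valuation =
  fixes v :: "'a::field \<Rightarrow> int" and p :: 'a
  assumes val_mult: "x \<noteq> 0 \<Longrightarrow> y \<noteq> 0 \<Longrightarrow> v (x * y) = v x + v y"
    and uniformiser_nonzero: "p \<noteq> 0"
    and val_uniformiser: "v p = 1"

lemma nonarch_local_field_imp_normalised_valuation:
  "nonarch_local_field v p \<Longrightarrow> normalised_valuation v p"
  unfolding nonarch_local_field_def normalised_valuation_def by blast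

context normalised_valuation
begin

lemma val_one: "v 1 = 0"
  using val_mult[of 1 1] by simp

lemma val_inverse: "x \<noteq> 0 \<Longrightarrow> v (1 / x) = - v x"
  using val_mult[of x "1 / x"] by (simp add: val_one)

lemma val_divide: "x \<noteq> 0 \<Longrightarrow> y \<noteq> 0 \<Longrightarrow> v (x / y) = v x - v y"
  using val_mult[of x "1 / y"] by (simp add: val_inverse)

lemma val_uniformiser_power: "v (p ^ n) = int n"
  by (induction n) (simp_all add: val_one val_mult uniformiser_nonzero val_uniformiser)

lemma is_unit_val_one: "is_unit_val v 1"
  by (simp add: is_unit_val_def val_one)

lemma is_unit_val_inverse: "is_unit_val v u \<Longrightarrow> is_unit_val v (1 / u)"
  by (simp add: is_unit_val_def val_inverse)

lemma val_gap_row_equiv: "row_equiv v c d c' d' \<Longrightarrow> val_gap v c' d' = val_gap v c d"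
  by (auto simp: row_equiv_def val_gap_def is_unit_val_def val_mult)

lemma val_gap_upow_one: "val_gap v (upow p \<gamma>) 1 = ereal_of_enat \<gamma>"
  by (cases \<gamma>) (simp_all add: val_gap_def upow_def val_uniformiser_power val_one uniformiser_nonzero)

lemma val_gap_one_upow: "val_gap v 1 (upow p \<gamma>) = - ereal_of_enat \<gamma>"
  by (cases \<gamma>) (simp_all add: val_gap_def upow_def val_uniformiser_power val_one uniformiser_nonzero)

lemma row_equiv_zero_one: "d \<noteq> 0 \<Longrightarrow> row_equiv v 0 d 0 1"
  unfolding row_equiv_def by (intro exI[of _ "1 / d"] exI[of _ 1]) (simp add: is_unit_val_one)

lemma row_equiv_power_one:
  assumes "c \<noteq> 0" "d \<noteq> 0" "v d \<le> v c"
  shows "row_equiv v c d (p ^ nat (v c - v d)) 1"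
proof -
  define u where "u = p ^ nat (v c - v d) * d / c"
  have "v u = 0"
    using assms unfolding u_def
    by (simp add: val_divide val_mult uniformiser_nonzero val_uniformiser_power)
  then have "is_unit_val v u"
    using assms uniformiser_nonzero by (simp add: is_unit_val_def u_def)
  then show ?thesis
    unfolding row_equiv_def using assms is_unit_val_one
    by (intro exI[of _ "1 / d"] exI[of _ u] exI[of _ 1]) (simp add: u_def)
qed

lemma row_equiv_representative:
  assumes "c \<noteq> 0 \<or> d \<noteq> 0"
  shows "(\<exists>\<gamma>. row_equiv v c d (upow p \<gamma>) 1) \<or> (\<exists>\<gamma>\<ge>1. row_equiv v c d 1 (upow p \<gamma>))"
proof -
  consider "c = 0" | "d = 0" | "c \<noteq> 0" "d \<noteq> 0" "v d \<le> v c" | "c \<noteq> 0" "d \<noteq> 0" "v c < v d"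
    by linarith
  then show ?thesis
  proof cases
    case 1
    then have "row_equiv v c d (upow p \<infinity>) 1"
      using assms row_equiv_zero_one by (simp add: upow_def)
    then show ?thesis by blast
  next
    case 2
    then have "row_equiv v c d 1 (upow p \<infinity>)"
      using assms row_equiv_swap[OF row_equiv_zero_one] by (simp add: upow_def)
    then show ?thesis by auto
  next
    case 3
    then have "row_equiv v c d (upow p (enat (nat (v c - v d)))) 1"
      using row_equiv_power_one by (simp add: upow_def)
    then show ?thesis by blast
  next
    case 4
    then have "row_equiv v c d 1 (upow p (enat (nat (v d - v c))))"
      using row_equiv_swap[OF row_equiv_power_one] by (simp add: upow_def)
    moreover have "1 \<le> enat (nat (v d - v c))"
      using 4 by (simp add: one_enat_def)
    ultimately show ?thesis by blast
  qed
qed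

lemma row_equiv_of_mem_orbit:
  assumes "C \<in> orbit v (Ncoset g)" "r \<in> C"
  shows "row_equiv v (g$2$1) (g$2$2) (r$2$1) (r$2$2)"
proof -
  obtain a k where ak: "C = act a k (Ncoset g)" "a \<in> Asub" "k \<in> KAsub v"
    using assms(1) unfolding orbit_def by blast
  obtain \<alpha> \<beta> where a: "a = mat2 \<alpha> 0 0 \<beta>" "\<beta> \<noteq> 0"
    using ak(2) unfolding Asub_def by auto
  obtain u w where k: "k = mat2 u 0 0 w" "is_unit_val v u" "is_unit_val v w"
    using ak(3) unfolding KAsub_def by auto
  have "matrix_inv k = mat2 (1 / u) 0 0 (1 / w)"
    using k by (simp add: is_unit_val_def matrix_inv_diag)
  moreover have "C = Ncoset (a ** g ** matrix_inv k)"
    using ak by (simp add: act_Ncoset)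
  ultimately have "r \<in> Ncoset (mat2 \<alpha> 0 0 \<beta> ** g ** mat2 (1 / u) 0 0 (1 / w))"
    using assms(2) a(1) by simp
  then have "r$2$1 = \<beta> * g$2$1 * (1 / u)" "r$2$2 = \<beta> * g$2$2 * (1 / w)"
    by (auto dest!: mem_Ncoset_row2 simp: diag_mult_mult_diag)
  then show ?thesis
    unfolding row_equiv_def using a(2) k(2,3) is_unit_val_inverse by blast
qed

lemma Ncoset_mem_orbit_of_row_equiv:
  assumes g: "invertible g" and r: "invertible r"
    and "row_equiv v (g$2$1) (g$2$2) (r$2$1) (r$2$2)"
  shows "Ncoset r \<in> orbit v (Ncoset g)"
proof -
  obtain b u w where b: "b \<noteq> 0" and units: "is_unit_val v u" "is_unit_val v w"
    and row: "r$2$1 = b * g$2$1 * u" "r$2$2 = b * g$2$2 * w"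
    using assms(3) unfolding row_equiv_def by blast
  have nonzero: "u \<noteq> 0" "w \<noteq> 0" "det g \<noteq> 0" "det r \<noteq> 0"
    using units g r by (simp_all add: is_unit_val_def invertible_det_nz)
  define \<alpha> where "\<alpha> = det r / (b * det g * u * w)"
  define a where "a = mat2 \<alpha> 0 0 b"
  define k where "k = mat2 (1 / u) 0 0 (1 / w)"
  have "\<alpha> \<noteq> 0"
    using b nonzero by (simp add: \<alpha>_def)
  then have a: "a \<in> Asub"
    using b unfolding a_def Asub_def by blast
  have k: "k \<in> KAsub v"
    using units is_unit_val_inverse unfolding k_def KAsub_def by blast
  have "act a k (Ncoset g) = Ncoset (a ** g ** mat2 u 0 0 w)"
    using nonzero by (simp add: act_Ncoset[OF a] k_def matrix_inv_diag)
  also have "\<dots> = Ncoset r"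
  proof (rule Ncoset_eqI)
    show "det r \<noteq> 0"
      using nonzero by simp
    show "(a ** g ** mat2 u 0 0 w) $ 2 = r $ 2"
      using row by (simp add: a_def diag_mult_mult_diag vec_eq_iff forall_2)
    show "det (a ** g ** mat2 u 0 0 w) = det r"
      using nonzero b by (simp add: a_def \<alpha>_def det_mul det_mat2)
  qed
  finally show ?thesis
    unfolding orbit_def using a k by blast
qed

lemma rep_coset_unique_val_gap:
  assumes "C \<in> rep_cosets p" "C' \<in> rep_cosets p"
    and gap: "\<And>r. r \<in> C \<union> C' \<Longrightarrow> val_gap v (r$2$1) (r$2$2) = x"
  shows "C = C'"
proof -
  have param: "\<exists>\<gamma>. D = Ncoset (mat2 1 0 (upow p \<gamma>) 1) \<and> x = ereal_of_enat \<gamma>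
      \<or> D = Ncoset (mat2 0 1 1 (upow p \<gamma>)) \<and> x = - ereal_of_enat \<gamma> \<and> 1 \<le> \<gamma>"
    if "D \<in> {C, C'}" for D
  proof -
    have gen_gap: "val_gap v (r$2$1) (r$2$2) = x" if "D = Ncoset r" for r
      using gap mem_Ncoset_self \<open>D \<in> {C, C'}\<close> that by blast
    from \<open>D \<in> {C, C'}\<close> assms(1,2) have "D \<in> rep_cosets p" by blast
    then show ?thesis
    proof (cases rule: rep_coset_cases)
      case (1 \<gamma>)
      then show ?thesis using gen_gap[of "mat2 1 0 (upow p \<gamma>) 1"] by (auto simp: val_gap_upow_one)
    next
      case (2 \<gamma>)
      then show ?thesis using gen_gap[of "mat2 0 1 1 (upow p \<gamma>)"] by (auto simp: val_gap_one_upow)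
    qed
  qed
  have enat_inj: "ereal_of_enat \<gamma> = ereal_of_enat \<gamma>' \<longleftrightarrow> \<gamma> = \<gamma>'" for \<gamma> \<gamma>'
    by (metis antisym ereal_of_enat_le_iff order.refl)
  have signs_differ: "ereal_of_enat \<gamma> \<noteq> - ereal_of_enat \<gamma>'" if "1 \<le> \<gamma>'" for \<gamma> \<gamma>'
  proof -
    have "0 < ereal_of_enat \<gamma>'"
      using order_less_le_trans[OF zero_less_one that] by simp
    moreover have "0 \<le> ereal_of_enat \<gamma>"
      by (rule ereal_of_enat_nonneg)
    ultimately show ?thesis
      by (auto simp del: ereal_of_enat_gt_zero_cancel_iff ereal_of_enat_ge_zero_cancel_iff)
  qed
  show ?thesis
    using param[of C] param[of C'] enat_inj signs_differ signs_differ[THEN not_sym] by auto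
qed

theorem unique_rep_coset_in_orbit:
  assumes g: "invertible g"
  shows "\<exists>!C. C \<in> rep_cosets p \<and> C \<in> orbit v (Ncoset g)"
proof (rule ex_ex1I)
  have "g$2$1 \<noteq> 0 \<or> g$2$2 \<noteq> 0"
    using g by (auto simp: invertible_det_nz det_2)
  then consider \<gamma> where "row_equiv v (g$2$1) (g$2$2) (upow p \<gamma>) 1"
    | \<gamma> where "1 \<le> \<gamma>" "row_equiv v (g$2$1) (g$2$2) 1 (upow p \<gamma>)"
    using row_equiv_representative by blast
  then show "\<exists>C. C \<in> rep_cosets p \<and> C \<in> orbit v (Ncoset g)"
  proof cases
    case (1 \<gamma>)
    then have "Ncoset (mat2 1 0 (upow p \<gamma>) 1) \<in> orbit v (Ncoset g)"
      by (intro Ncoset_mem_orbit_of_row_equiv g) (simp_all add: invertible_det_nz det_mat2)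
    then show ?thesis unfolding rep_cosets_def by blast
  next
    case (2 \<gamma>)
    then have "Ncoset (mat2 0 1 1 (upow p \<gamma>)) \<in> orbit v (Ncoset g)"
      by (intro Ncoset_mem_orbit_of_row_equiv g) (simp_all add: invertible_det_nz det_mat2)
    then show ?thesis unfolding rep_cosets_def using 2 by blast
  qed
next
  fix C C'
  assume "C \<in> rep_cosets p \<and> C \<in> orbit v (Ncoset g)" "C' \<in> rep_cosets p \<and> C' \<in> orbit v (Ncoset g)"
  then show "C = C'"
    by (intro rep_coset_unique_val_gap[where x = "val_gap v (g$2$1) (g$2$2)"])
      (auto dest: row_equiv_of_mem_orbit val_gap_row_equiv)
qed

end

theorem proposition5p1:
  fixes v :: "'a::field_char_0 \<Rightarrow> int" and p :: 'a
  assumes "nonarch_local_field v p"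
  shows "\<forall>g\<in>(GL2 :: ('a^2^2) set). \<exists>!C. C \<in> rep_cosets p \<and> C \<in> orbit v (Ncoset g)"
  using normalised_valuation.unique_rep_coset_in_orbit
    [OF nonarch_local_field_imp_normalised_valuation[OF assms]]
  unfolding GL2_def by blast

end
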